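(* Let $A$ be a unital C*-algebra and let $F\subseteq\Sigma_\ast$ be closed. Then $F$ is irreducible (i.e. whenever $F=F_1\cup F_2$ with $F_1,F_2$ closed, then $F=F_1$ or $F=F_2$) if and only if: (1) for every $C\in\mathcal C(A)$, if $F_C\ne\emptyset$ then $F_C$ is a singleton; and (2) for all $C_1,C_2\in\mathcal C(A)$ with $F_{C_1}\ne\emptyset$ and $F_{C_2}\ne\emptyset$, there is $C_3\in\mathcal C(A)$ with $C_1,C_2\subseteq C_3$ and $F_{C_3}\neq\emptyset$.
   Context: Let $A$ be a unital C*-algebra. $\mathcal C(A)$ is the poset (under inclusion) of commutative C*-subalgebras of $A$ containing the unit of $A$. For $C\in\mathcal C(A)$, $\Sigma_C$ is its Gelfand spectrum; for $C\subseteq C'$ and $\lambda'\in\Sigma_{C'}$, $\lambda'|_C$ is the restriction. Let $\Sigma=\{(C,\lambda)\mid C\in\mathcal C(A),\lambda\in\Sigma_C\}$ and $U_C=\{\lambda\mid(C,\lambda)\in U\}$ for $U\subseteq\Sigma$. The space $\Sigma_\ast$ is $\Sigma$ with the topology in which $U$ is open iff (1) each $U_C$ is open in $\Sigma_C$, and (2) if $\lambda\in U_C$, $C\subseteq C'$ and $\lambda'\in\Sigma_{C'}$ with $\lambda'|_C=\lambda$, then $\lambda'\in U_{C'}$. *)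

theory Defs
  imports "HOL-Analysis.Analysis"
begin

text \<open>HOL-Analysis has no complex vector spaces / C*-algebras,
so we axiomatize a unital complex Banach *-algebra satisfying the C*-identity as a
type class on top of real_normed_algebra_1 and banach.\<close>

class cstar_algebra = real_normed_algebra_1 + banach +
  fixes scaleC :: "complex \<Rightarrow> 'a \<Rightarrow> 'a"
    and cstar :: "'a \<Rightarrow> 'a"
  assumes scaleC_of_real: "scaleC (of_real r) x = scaleR r x"
    and scaleC_add_right: "scaleC c (x + y) = scaleC c x + scaleC c y"
    and scaleC_add_left: "scaleC (c + d) x = scaleC c x + scaleC d x"
    and scaleC_scaleC: "scaleC c (scaleC d x) = scaleC (c * d) x"
    and scaleC_mult_left: "scaleC c (x * y) = scaleC c x * y"
    and scaleC_mult_right: "scaleC c (x * y) = x * scaleC c y"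
    and norm_scaleC: "norm (scaleC c x) = cmod c * norm x"
    and cstar_add: "cstar (x + y) = cstar x + cstar y"
    and cstar_scaleC: "cstar (scaleC c x) = scaleC (cnj c) (cstar x)"
    and cstar_mult: "cstar (x * y) = cstar y * cstar x"
    and cstar_cstar: "cstar (cstar x) = x"
    and cstar_identity: "norm (cstar x * x) = norm x ^ 2"

definition comm_subalgs :: "('a::cstar_algebra) set set" where
  "comm_subalgs = {C. 1 \<in> C
      \<and> (\<forall>x\<in>C. \<forall>y\<in>C. x + y \<in> C)
      \<and> (\<forall>c. \<forall>x\<in>C. scaleC c x \<in> C)
      \<and> (\<forall>x\<in>C. \<forall>y\<in>C. x * y \<in> C)
      \<and> (\<forall>x\<in>C. cstar x \<in> C)
      \<and> closed C
      \<and> (\<forall>x\<in>C. \<forall>y\<in>C. x * y = y * x)}"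

text \<open>Gelfand spectrum of C: nonzero multiplicative complex-linear functionals on C,
represented as functions extensional on C (value undefined outside C).\<close>
definition gelfand_spectrum :: "('a::cstar_algebra) set \<Rightarrow> ('a \<Rightarrow> complex) set" where
  "gelfand_spectrum C = {l. l \<in> extensional C
      \<and> (\<forall>x\<in>C. \<forall>y\<in>C. l (x + y) = l x + l y)
      \<and> (\<forall>c. \<forall>x\<in>C. l (scaleC c x) = c * l x)
      \<and> (\<forall>x\<in>C. \<forall>y\<in>C. l (x * y) = l x * l y)
      \<and> (\<exists>x\<in>C. l x \<noteq> 0)}"

definition gelfand_top :: "('a::cstar_algebra) set \<Rightarrow> ('a \<Rightarrow> complex) topology" where
  "gelfand_top C = subtopology (product_topology (\<lambda>_. euclidean) C) (gelfand_spectrum C)"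

definition Sigma_pairs :: "('a::cstar_algebra set \<times> ('a \<Rightarrow> complex)) set" where
  "Sigma_pairs = {(C, l). C \<in> comm_subalgs \<and> l \<in> gelfand_spectrum C}"

definition fiber :: "('a set \<times> ('a \<Rightarrow> complex)) set \<Rightarrow> 'a set \<Rightarrow> ('a \<Rightarrow> complex) set" where
  "fiber U C = {l. (C, l) \<in> U}"

definition star_open :: "('a::cstar_algebra set \<times> ('a \<Rightarrow> complex)) set \<Rightarrow> bool" where
  "star_open U \<longleftrightarrow> U \<subseteq> Sigma_pairs
     \<and> (\<forall>C\<in>comm_subalgs. openin (gelfand_top C) (fiber U C))
     \<and> (\<forall>C l C' l'. l \<in> fiber U C \<and> C \<in> comm_subalgs \<and> C' \<in> comm_subalgs \<and> C \<subseteq> C'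
            \<and> l' \<in> gelfand_spectrum C' \<and> restrict l' C = l \<longrightarrow> l' \<in> fiber U C')"

definition star_closed :: "('a::cstar_algebra set \<times> ('a \<Rightarrow> complex)) set \<Rightarrow> bool" where
  "star_closed F \<longleftrightarrow> F \<subseteq> Sigma_pairs \<and> star_open (Sigma_pairs - F)"

definition star_irreducible :: "('a::cstar_algebra set \<times> ('a \<Rightarrow> complex)) set \<Rightarrow> bool" where
  "star_irreducible F \<longleftrightarrow> (\<forall>F1 F2. star_closed F1 \<and> star_closed F2 \<and> F = F1 \<union> F2
      \<longrightarrow> F = F1 \<or> F = F2)"

end

theory Submission
  imports Defs
begin

text \<open>
  A closed set \<open>F\<close> is irreducible iff any two opens meeting \<open>F\<close> meet \<open>F\<close> in a common
  point.  The only opens needed are the cones \<open>{(C,\<lambda>). C\<^sub>0 \<subseteq> C, \<lambda>(x) \<in> B}\<close> for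
  \<open>x \<in> C\<^sub>0\<close> and \<open>B \<subseteq> \<complex>\<close> open.  The cones with \<open>x = 1\<close>, \<open>B = \<complex>\<close> above \<open>C\<^sub>1\<close> and above
  \<open>C\<^sub>2\<close> must meet in \<open>F\<close>, which gives directedness (2); two cones over one \<open>C\<close> with
  disjoint \<open>B\<close> separate two distinct characters of \<open>C\<close>, which gives the singleton
  condition (1).
  Conversely, closed sets are closed under restriction of characters to smaller
  subalgebras; so if (1) and (2) hold and \<open>F = F\<^sub>1 \<union> F\<^sub>2\<close>, the unique point of \<open>F\<close>
  over a common upper bound \<open>C\<^sub>3\<close> lies in some \<open>F\<^sub>i\<close>, and by restriction \<open>F\<^sub>i\<close> then
  contains the unique point of \<open>F\<close> over every \<open>C \<subseteq> C\<^sub>3\<close>.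
\<close>

lemma Sigma_pairs_iff: "(C, l) \<in> Sigma_pairs \<longleftrightarrow> C \<in> comm_subalgs \<and> l \<in> gelfand_spectrum C"
  by (simp add: Sigma_pairs_def)

lemma topspace_gelfand_top: "topspace (gelfand_top C) = gelfand_spectrum C"
  unfolding gelfand_top_def gelfand_spectrum_def
  by (auto simp: topspace_product_topology PiE_def)

lemma star_closed_subset: "star_closed F \<Longrightarrow> F \<subseteq> Sigma_pairs"
  by (simp add: star_closed_def)

lemma star_open_subset: "star_open U \<Longrightarrow> U \<subseteq> Sigma_pairs"
  by (simp add: star_open_def)

lemma star_open_fiber:
  assumes "star_open U" "C \<in> comm_subalgs"
  shows "openin (gelfand_top C) (fiber U C)"
  using assms unfolding star_open_def by blast

lemma star_open_upward:
  assumes "star_open U" "l \<in> fiber U C" "C \<in> comm_subalgs" "C' \<in> comm_subalgs" "C \<subseteq> C'"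
    and "l' \<in> gelfand_spectrum C'" "restrict l' C = l"
  shows "l' \<in> fiber U C'"
proof -
  have "\<forall>C l C' l'. l \<in> fiber U C \<and> C \<in> comm_subalgs \<and> C' \<in> comm_subalgs \<and> C \<subseteq> C'
            \<and> l' \<in> gelfand_spectrum C' \<and> restrict l' C = l \<longrightarrow> l' \<in> fiber U C'"
    using assms(1) unfolding star_open_def by (rule conjunct2[OF conjunct2])
  then show ?thesis
    using assms(2-7) by blast
qed

lemma star_open_Un:
  assumes U: "star_open U" and V: "star_open V"
  shows "star_open (U \<union> V)"
proof -
  have fiber_Un: "fiber (U \<union> V) C = fiber U C \<union> fiber V C" for C
    by (auto simp: fiber_def)
  show ?thesis
    unfolding star_open_def
  proof (intro conjI ballI allI impI)
    show "U \<union> V \<subseteq> Sigma_pairs"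
      using star_open_subset[OF U] star_open_subset[OF V] by blast
  next
    fix C :: "'a set"
    assume "C \<in> comm_subalgs"
    then show "openin (gelfand_top C) (fiber (U \<union> V) C)"
      unfolding fiber_Un using star_open_fiber U V by (blast intro: openin_Un)
  next
    fix C l C' l'
    assume "l \<in> fiber (U \<union> V) C \<and> C \<in> comm_subalgs \<and> C' \<in> comm_subalgs \<and> C \<subseteq> C'
            \<and> l' \<in> gelfand_spectrum C' \<and> restrict l' C = l"
    then show "l' \<in> fiber (U \<union> V) C'"
      using star_open_upward[OF U, of l C C' l'] star_open_upward[OF V, of l C C' l']
      unfolding fiber_Un by blast
  qed
qed

lemma star_closed_Diff:
  assumes "star_closed F" and "star_open U"
  shows "star_closed (F - U)"
proof -
  have "Sigma_pairs - (F - U) = (Sigma_pairs - F) \<union> U"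
    using star_closed_subset[OF assms(1)] star_open_subset[OF assms(2)] by blast
  with assms show ?thesis
    unfolding star_closed_def by (auto intro: star_open_Un)
qed

lemma star_irreducible_opens_meet:
  assumes "star_irreducible F" "star_closed F" "star_open U" "star_open V"
    and "F \<inter> U \<noteq> {}" "F \<inter> V \<noteq> {}"
  shows "F \<inter> U \<inter> V \<noteq> {}"
proof
  assume "F \<inter> U \<inter> V = {}"
  then have "F = (F - U) \<union> (F - V)" by blast
  moreover have "star_closed (F - U)" "star_closed (F - V)"
    using assms(2-4) by (auto intro: star_closed_Diff)
  ultimately have "F = F - U \<or> F = F - V"
    using assms(1) unfolding star_irreducible_def by blast
  with assms(5,6) show False by blast
qed

definition eval_cone ::
    "'a::cstar_algebra set \<Rightarrow> 'a \<Rightarrow> complex set \<Rightarrow> ('a set \<times> ('a \<Rightarrow> complex)) set" where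
  "eval_cone C0 x B = {p \<in> Sigma_pairs. C0 \<subseteq> fst p \<and> snd p x \<in> B}"

text \<open>Within one fibre, the cone is the preimage of \<open>B\<close> under evaluation at \<open>x\<close>,
  which is weak-* continuous; upward closure holds since restriction preserves \<open>\<lambda>(x)\<close>.\<close>

lemma star_open_eval_cone:
  assumes "x \<in> C0" and "open B"
  shows "star_open (eval_cone C0 x B)"
  unfolding star_open_def
proof (intro conjI ballI allI impI)
  fix C :: "'a set"
  assume C: "C \<in> comm_subalgs"
  show "openin (gelfand_top C) (fiber (eval_cone C0 x B) C)"
  proof (cases "C0 \<subseteq> C")
    case True
    then have "x \<in> C"
      using assms(1) by blast
    then have "continuous_map (product_topology (\<lambda>_. euclidean) C) euclidean (\<lambda>l. l x)"
      using continuous_map_product_projection[of x C "\<lambda>_. euclidean"] by simp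
    then have "continuous_map (gelfand_top C) euclidean (\<lambda>l. l x)"
      unfolding gelfand_top_def by (rule continuous_map_from_subtopology)
    moreover have "openin euclidean B"
      using assms(2) by (simp only: open_openin)
    ultimately have "openin (gelfand_top C) {l \<in> topspace (gelfand_top C). l x \<in> B}"
      by (rule openin_continuous_map_preimage)
    moreover have "fiber (eval_cone C0 x B) C = {l \<in> topspace (gelfand_top C). l x \<in> B}"
      using C True by (auto simp: fiber_def eval_cone_def topspace_gelfand_top Sigma_pairs_iff)
    ultimately show ?thesis by simp
  next
    case False
    then have "fiber (eval_cone C0 x B) C = {}"
      by (auto simp: fiber_def eval_cone_def)
    then show ?thesis by simp
  qed
next
  fix C l C' l'
  assume "l \<in> fiber (eval_cone C0 x B) C \<and> C \<in> comm_subalgs \<and> C' \<in> comm_subalgs \<and> C \<subseteq> C'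
            \<and> l' \<in> gelfand_spectrum C' \<and> restrict l' C = l"
  moreover from this have "l' x = l x"
    using assms(1) by (auto simp: fiber_def eval_cone_def)
  ultimately show "l' \<in> fiber (eval_cone C0 x B) C'"
    by (auto simp: fiber_def eval_cone_def Sigma_pairs_iff)
qed (auto simp: eval_cone_def)

text \<open>A character sends the unit to \<open>1\<close>, since it is multiplicative and nonzero.\<close>

lemma gelfand_spectrum_unit:
  assumes "l \<in> gelfand_spectrum C" "1 \<in> C"
  shows "l 1 = 1"
proof -
  obtain x where x: "x \<in> C" "l x \<noteq> 0"
    using assms(1) by (auto simp: gelfand_spectrum_def)
  have "l x * 1 = l (x * 1)" by simp
  also have "\<dots> = l x * l 1"
    using assms x(1) unfolding gelfand_spectrum_def by blast
  finally show ?thesis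
    using x(2) by (metis mult_left_cancel)
qed

lemma restrict_gelfand_spectrum:
  assumes "l \<in> gelfand_spectrum C'" "C \<in> comm_subalgs" "C \<subseteq> C'"
  shows "restrict l C \<in> gelfand_spectrum C"
proof -
  have closed_ops: "1 \<in> C" "\<And>a b. a \<in> C \<Longrightarrow> b \<in> C \<Longrightarrow> a + b \<in> C \<and> a * b \<in> C"
    "\<And>c a. a \<in> C \<Longrightarrow> scaleC c a \<in> C"
    using assms(2) by (auto simp: comm_subalgs_def)
  have "l 1 = 1"
    using gelfand_spectrum_unit assms(1,3) closed_ops(1) by blast
  moreover have "restrict l C \<in> extensional C"
    by simp
  ultimately show ?thesis
    using closed_ops assms(1,3) unfolding gelfand_spectrum_def
    by (simp add: subset_iff) (metis zero_neq_one)
qed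

text \<open>This is condition (2) for the open complement.\<close>

lemma star_closed_restrict:
  assumes "star_closed F" "(C', l) \<in> F" "C \<in> comm_subalgs" "C \<subseteq> C'"
  shows "(C, restrict l C) \<in> F"
proof (rule ccontr)
  assume notin: "(C, restrict l C) \<notin> F"
  have "C' \<in> comm_subalgs" "l \<in> gelfand_spectrum C'"
    using assms(2) star_closed_subset[OF assms(1)] by (auto simp: Sigma_pairs_iff)
  moreover have "restrict l C \<in> fiber (Sigma_pairs - F) C"
    using notin assms(3,4) calculation restrict_gelfand_spectrum
    by (auto simp: fiber_def Sigma_pairs_iff)
  moreover have "star_open (Sigma_pairs - F)"
    using assms(1) by (simp add: star_closed_def)
  ultimately have "l \<in> fiber (Sigma_pairs - F) C'"
    using star_open_upward assms(3,4) by fastforce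
  with assms(2) show False by (simp add: fiber_def)
qed

text \<open>Necessity of (1): two distinct characters in one fibre of \<open>F\<close> differ at some \<open>x\<close>;
  disjoint neighbourhoods of their values give disjoint cones both meeting \<open>F\<close>.\<close>

lemma star_irreducible_fiber_singleton:
  assumes irr: "star_irreducible F" and cl: "star_closed F"
    and C: "C \<in> comm_subalgs" and ne: "fiber F C \<noteq> {}"
  shows "\<exists>l. fiber F C = {l}"
proof (rule ccontr)
  assume not_single: "\<nexists>l. fiber F C = {l}"
  obtain l where "l \<in> fiber F C"
    using ne by blast
  moreover from this obtain m where "m \<in> fiber F C" "l \<noteq> m"
    using not_single by blast
  ultimately have lm: "(C, l) \<in> F" "(C, m) \<in> F" "l \<noteq> m"
    by (auto simp: fiber_def)
  then have "l \<in> gelfand_spectrum C" "m \<in> gelfand_spectrum C"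
    using star_closed_subset[OF cl] by (auto simp: Sigma_pairs_iff)
  then have "l \<in> extensional C" "m \<in> extensional C"
    by (simp_all add: gelfand_spectrum_def)
  then have "\<exists>x\<in>C. l x \<noteq> m x"
    using extensionalityI[of l C m] lm(3) by blast
  then obtain x where x: "x \<in> C" "l x \<noteq> m x"
    by blast
  then obtain U V where UV: "open U" "open V" "l x \<in> U" "m x \<in> V" "U \<inter> V = {}"
    using hausdorff[OF x(2)] by blast
  have "F \<inter> eval_cone C x U \<inter> eval_cone C x V \<noteq> {}"
  proof (rule star_irreducible_opens_meet[OF irr cl])
    show "star_open (eval_cone C x U)" "star_open (eval_cone C x V)"
      using x(1) UV by (auto intro: star_open_eval_cone)
    show "F \<inter> eval_cone C x U \<noteq> {}" "F \<inter> eval_cone C x V \<noteq> {}"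
      using lm star_closed_subset[OF cl] UV by (auto simp: eval_cone_def)
  qed
  with UV(5) show False by (auto simp: eval_cone_def)
qed

text \<open>Necessity of (2): the cones above \<open>C\<^sub>1\<close> and above \<open>C\<^sub>2\<close> are open and meet \<open>F\<close>, so
  they meet in \<open>F\<close>, at a point over a common upper bound \<open>C\<^sub>3\<close>.\<close>

lemma star_irreducible_directed:
  assumes irr: "star_irreducible F" and cl: "star_closed F"
    and C: "C1 \<in> comm_subalgs" "C2 \<in> comm_subalgs"
    and ne: "fiber F C1 \<noteq> {}" "fiber F C2 \<noteq> {}"
  shows "\<exists>C3\<in>comm_subalgs. C1 \<subseteq> C3 \<and> C2 \<subseteq> C3 \<and> fiber F C3 \<noteq> {}"
proof -
  have unit: "1 \<in> C1" "1 \<in> C2"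
    using C by (auto simp: comm_subalgs_def)
  have "F \<inter> eval_cone C1 1 UNIV \<inter> eval_cone C2 1 UNIV \<noteq> {}"
  proof (rule star_irreducible_opens_meet[OF irr cl])
    show "star_open (eval_cone C1 1 UNIV)" "star_open (eval_cone C2 1 UNIV)"
      using unit by (auto intro: star_open_eval_cone)
    show "F \<inter> eval_cone C1 1 UNIV \<noteq> {}" "F \<inter> eval_cone C2 1 UNIV \<noteq> {}"
      using ne star_closed_subset[OF cl] by (auto simp: eval_cone_def fiber_def)
  qed
  then obtain C3 l3 where p3: "(C3, l3) \<in> F" "C1 \<subseteq> C3" "C2 \<subseteq> C3"
    by (auto simp: eval_cone_def)
  moreover have "C3 \<in> comm_subalgs"
    using p3(1) star_closed_subset[OF cl] by (auto simp: Sigma_pairs_iff)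
  ultimately show ?thesis
    by (intro bexI[of _ C3]) (auto simp: fiber_def)
qed

text \<open>Points
  of \<open>F\<close> outside \<open>F\<^sub>1\<close> and outside \<open>F\<^sub>2\<close> have a common upper bound \<open>C\<^sub>3\<close> carrying a
  unique point of \<open>F\<close>, which lies in some \<open>F\<^sub>i\<close>; restricting it puts the corresponding
  point back into \<open>F\<^sub>i\<close>, because the fibre of \<open>F\<close> below is a singleton.\<close>

lemma star_irreducibleI:
  assumes cl: "star_closed F"
    and single: "\<And>C. C \<in> comm_subalgs \<Longrightarrow> fiber F C \<noteq> {} \<Longrightarrow> \<exists>l. fiber F C = {l}"
    and directed: "\<And>C1 C2. C1 \<in> comm_subalgs \<Longrightarrow> C2 \<in> comm_subalgs \<Longrightarrow>
        fiber F C1 \<noteq> {} \<Longrightarrow> fiber F C2 \<noteq> {} \<Longrightarrow>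
        \<exists>C3\<in>comm_subalgs. C1 \<subseteq> C3 \<and> C2 \<subseteq> C3 \<and> fiber F C3 \<noteq> {}"
  shows "star_irreducible F"
proof -
  have F_Sigma: "F \<subseteq> Sigma_pairs"
    using cl by (rule star_closed_subset)
  have reach: "(C, l) \<in> F'"
    if F': "star_closed F'" "F' \<subseteq> F" and p: "(C, l) \<in> F"
      and above: "(C3, l3) \<in> F'" "C \<subseteq> C3" for F' C l C3 l3
  proof -
    have C: "C \<in> comm_subalgs"
      using p F_Sigma by (auto simp: Sigma_pairs_iff)
    have restr: "(C, restrict l3 C) \<in> F'"
      using star_closed_restrict F'(1) above C by blast
    obtain m where m: "fiber F C = {m}"
      using single[OF C] p by (auto simp: fiber_def)
    have "restrict l3 C \<in> fiber F C" "l \<in> fiber F C"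
      using restr F'(2) p by (auto simp: fiber_def)
    with m have "restrict l3 C = l"
      by simp
    with restr show ?thesis
      by simp
  qed
  show ?thesis
    unfolding star_irreducible_def
  proof (intro allI impI)
    fix F1 F2
    assume split: "star_closed F1 \<and> star_closed F2 \<and> F = F1 \<union> F2"
    show "F = F1 \<or> F = F2"
    proof (rule ccontr)
      assume "\<not> (F = F1 \<or> F = F2)"
      then obtain C1 l1 C2 l2 where p1: "(C1, l1) \<in> F" "(C1, l1) \<notin> F1"
        and p2: "(C2, l2) \<in> F" "(C2, l2) \<notin> F2"
        using split by auto
      have "(C1, l1) \<in> Sigma_pairs" "(C2, l2) \<in> Sigma_pairs"
        using p1(1) p2(1) F_Sigma by blast+
      then have "C1 \<in> comm_subalgs" "C2 \<in> comm_subalgs"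
        by (simp_all add: Sigma_pairs_iff)
      moreover have "l1 \<in> fiber F C1" "l2 \<in> fiber F C2"
        using p1(1) p2(1) by (simp_all add: fiber_def)
      ultimately obtain C3 where C3: "C1 \<subseteq> C3" "C2 \<subseteq> C3" "fiber F C3 \<noteq> {}"
        using directed by (metis empty_iff)
      then obtain l3 where "(C3, l3) \<in> F"
        by (auto simp: fiber_def)
      then consider "(C3, l3) \<in> F1" | "(C3, l3) \<in> F2"
        using split by blast
      then show False
      proof cases
        case 1
        then show False
          using reach[of F1 C1 l1 C3 l3] split p1 C3(1) by blast
      next
        case 2
        then show False
          using reach[of F2 C2 l2 C3 l3] split p2 C3(2) by blast
      qed
    qed
  qed
qed

theorem lemma2p24:
  fixes F :: "('a::cstar_algebra set \<times> ('a \<Rightarrow> complex)) set"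
  assumes "star_closed F"
  shows "star_irreducible F \<longleftrightarrow>
    ((\<forall>C\<in>comm_subalgs. fiber F C \<noteq> {} \<longrightarrow> (\<exists>l. fiber F C = {l}))
     \<and> (\<forall>C1\<in>comm_subalgs. \<forall>C2\<in>comm_subalgs. fiber F C1 \<noteq> {} \<and> fiber F C2 \<noteq> {} \<longrightarrow>
          (\<exists>C3\<in>comm_subalgs. C1 \<subseteq> C3 \<and> C2 \<subseteq> C3 \<and> fiber F C3 \<noteq> {})))"
proof
  assume irr: "star_irreducible F"
  show "(\<forall>C\<in>comm_subalgs. fiber F C \<noteq> {} \<longrightarrow> (\<exists>l. fiber F C = {l}))
     \<and> (\<forall>C1\<in>comm_subalgs. \<forall>C2\<in>comm_subalgs. fiber F C1 \<noteq> {} \<and> fiber F C2 \<noteq> {} \<longrightarrow>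
          (\<exists>C3\<in>comm_subalgs. C1 \<subseteq> C3 \<and> C2 \<subseteq> C3 \<and> fiber F C3 \<noteq> {}))"
    using star_irreducible_fiber_singleton[OF irr assms] star_irreducible_directed[OF irr assms]
    by blast
next
  assume conds: "(\<forall>C\<in>comm_subalgs. fiber F C \<noteq> {} \<longrightarrow> (\<exists>l. fiber F C = {l}))
     \<and> (\<forall>C1\<in>comm_subalgs. \<forall>C2\<in>comm_subalgs. fiber F C1 \<noteq> {} \<and> fiber F C2 \<noteq> {} \<longrightarrow>
          (\<exists>C3\<in>comm_subalgs. C1 \<subseteq> C3 \<and> C2 \<subseteq> C3 \<and> fiber F C3 \<noteq> {}))"
  show "star_irreducible F"
    by (rule star_irreducibleI[OF assms]) (use conds in blast)+
qed

end
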